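(* Let $A\in\mathbb{Z}^{d\times n}$, $\mathbf{b}\in\mathbb{Z}^d$, $\mathbf{c}\in\mathbb{Z}^n$, $\mathbf{u}\in\mathbb{Z}_{\ge0}^n$, and consider the LP $\min\{\mathbf{c}^\top\mathbf{x} : A\mathbf{x}=\mathbf{b},\ \mathbf{0}\le\mathbf{x}\le\mathbf{u},\ \mathbf{x}\in\mathbb{R}^n\}$. Then: (i) for every feasible $\mathbf{x}$ and every $\mathbf{z}\in\mathbb{R}^n\setminus\{\mathbf{0}\}$ with $A\mathbf{z}=\mathbf{0}$ and $\mathbf{x}+\epsilon\mathbf{z}$ feasible for some $\epsilon>0$, there exists $\mathbf{g}\in\mathcal{C}(A)$ with $\mathbf{x}+\epsilon'\mathbf{g}$ feasible for some $\epsilon'>0$ and $-\mathbf{c}^\top\mathbf{g}/\|\mathbf{g}\|_1\ge-\mathbf{c}^\top\mathbf{z}/\|\mathbf{z}\|_1$; hence a discrete steepest-descent direction is a steepest-descent direction among all applicable real directions; (ii) from any feasible solution $\mathbf{x}_0$, every sequence of discrete steepest-descent augmentations reaches an optimal solution after at most $|\mathcal{C}(A)|$ augmentations.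
   Context: Feasible solutions are the $\mathbf{x}\in\mathbb{R}^n$ with $A\mathbf{x}=\mathbf{b}$, $\mathbf{0}\le\mathbf{x}\le\mathbf{u}$. The circuits $\mathcal{C}(A)$: for each nonzero $\mathbf{z}\in\ker(A)$ whose support is inclusion-minimal among supports of nonzero vectors of $\ker(A)$, the line $\mathbb{R}\mathbf{z}$ contains exactly two nonzero integer points closest to the origin; $\mathcal{C}(A)$ is the finite set of all these vectors. Discrete steepest-descent augmentation (LP): given a feasible $\mathbf{x}_k$, choose $\mathbf{z}\in\mathcal{C}(A)$ maximizing $-\mathbf{c}^\top\mathbf{z}/\|\mathbf{z}\|_1$ among all $\mathbf{z}\in\mathcal{C}(A)$ such that $\mathbf{x}_k+\epsilon\mathbf{z}$ is feasible for some $\epsilon>0$; if this maximum is positive, let $\alpha$ be the largest real number with $\mathbf{x}_k+\alpha\mathbf{z}$ feasible and set $\mathbf{x}_{k+1}:=\mathbf{x}_k+\alpha\mathbf{z}$, otherwise stop. *)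

theory Defs
  imports "HOL-Analysis.Analysis"
begin

definition rvec :: "int^'n \<Rightarrow> real^'n" where
  "rvec v = (\<chi> i. real_of_int (v $ i))"

definition rmat :: "int^'n^'d \<Rightarrow> real^'n^'d" where
  "rmat A = (\<chi> i j. real_of_int (A $ i $ j))"

definition supp :: "real^'n \<Rightarrow> 'n set" where
  "supp z = {i. z $ i \<noteq> 0}"

definition feasible :: "int^'n^'d \<Rightarrow> int^'d \<Rightarrow> int^'n \<Rightarrow> real^'n \<Rightarrow> bool" where
  "feasible A b u x \<longleftrightarrow> rmat A *v x = rvec b \<and> (\<forall>i. 0 \<le> x $ i \<and> x $ i \<le> real_of_int (u $ i))"

definition min_supp_kernel :: "int^'n^'d \<Rightarrow> real^'n \<Rightarrow> bool" where
  "min_supp_kernel A z \<longleftrightarrow> z \<noteq> 0 \<and> rmat A *v z = 0 \<and>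
     (\<forall>w. w \<noteq> 0 \<and> rmat A *v w = 0 \<and> supp w \<subseteq> supp z \<longrightarrow> supp w = supp z)"

definition circuits :: "int^'n^'d \<Rightarrow> (int^'n) set" where
  "circuits A = {g. \<exists>z. min_supp_kernel A z \<and> g \<noteq> 0 \<and> (\<exists>t::real. rvec g = t *\<^sub>R z) \<and>
       (\<forall>h::int^'n. h \<noteq> 0 \<and> (\<exists>t::real. rvec h = t *\<^sub>R z) \<longrightarrow> norm (rvec g) \<le> norm (rvec h))}"

definition norm1 :: "real^'n \<Rightarrow> real" where
  "norm1 z = (\<Sum>i\<in>UNIV. \<bar>z $ i\<bar>)"

definition ratio :: "int^'n \<Rightarrow> real^'n \<Rightarrow> real" where
  "ratio c z = - (rvec c \<bullet> z) / norm1 z"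

definition applicable :: "int^'n^'d \<Rightarrow> int^'d \<Rightarrow> int^'n \<Rightarrow> real^'n \<Rightarrow> real^'n \<Rightarrow> bool" where
  "applicable A b u x z \<longleftrightarrow> (\<exists>\<epsilon>>0. feasible A b u (x + \<epsilon> *\<^sub>R z))"

definition optimal :: "int^'n^'d \<Rightarrow> int^'d \<Rightarrow> int^'n \<Rightarrow> int^'n \<Rightarrow> real^'n \<Rightarrow> bool" where
  "optimal A b c u x \<longleftrightarrow> feasible A b u x \<and>
     (\<forall>y. feasible A b u y \<longrightarrow> rvec c \<bullet> x \<le> rvec c \<bullet> y)"

definition sd_step :: "int^'n^'d \<Rightarrow> int^'d \<Rightarrow> int^'n \<Rightarrow> int^'n \<Rightarrow> real^'n \<Rightarrow> real^'n \<Rightarrow> bool" where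
  "sd_step A b c u x x' \<longleftrightarrow> (\<exists>g \<in> circuits A.
     applicable A b u x (rvec g) \<and>
     (\<forall>h \<in> circuits A. applicable A b u x (rvec h) \<longrightarrow> ratio c (rvec h) \<le> ratio c (rvec g)) \<and>
     ratio c (rvec g) > 0 \<and>
     (\<exists>\<alpha>. feasible A b u (x + \<alpha> *\<^sub>R rvec g) \<and>
          (\<forall>a. feasible A b u (x + a *\<^sub>R rvec g) \<longrightarrow> a \<le> \<alpha>) \<and>
          x' = x + \<alpha> *\<^sub>R rvec g))"

end

theory Submission
  imports Defs
begin

text \<open>
  Part (i): an applicable kernel direction z is split conformally: a support-minimal kernel
  vector y conformal to z exists, a positive multiple of y is a circuit g (because A is
  integral the line R y contains integer points, and g is a shortest one), and z - t g is
  again conformal to z with smaller support for the right t > 0. As the pieces do not cancel,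
  the ratio of z is at most the larger ratio of the pieces (mediant inequality), and induction
  on the support finishes the proof.

  Part (ii): by (i), the steepest circuit ratio d at x bounds the descent rate of every
  applicable direction at x, and this bound survives a step that descends at rate d. Hence the
  ratios along a run never increase, and a circuit used twice would make the whole stretch
  between its two uses sign-compatible with it, so it would not have been blocked by the
  first maximal step. Thus the circuits used are pairwise distinct, which bounds the number
  of steps by |C(A)|; and a feasible point without an augmentation is optimal because an
  improving point yields an improving steepest circuit and a maximal step along it.
\<close>

lemma rvec_nth [simp]: "rvec g $ i = real_of_int (g $ i)"
  by (simp add: rvec_def)

lemma rvec_uminus: "rvec (- g) = - rvec g"
  by (simp add: vec_eq_iff)

lemma rvec_inj: "rvec g = rvec h \<longleftrightarrow> g = h"
  by (simp add: vec_eq_iff)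

lemma rvec_eq_0_iff [simp]: "rvec g = 0 \<longleftrightarrow> g = 0"
  by (simp add: vec_eq_iff)

lemma supp_scaleR [simp]: "t \<noteq> 0 \<Longrightarrow> supp (t *\<^sub>R z) = supp z"
  by (simp add: supp_def)

text \<open>Rows of A z as explicit sums; used to transport kernel equations through a
  \<rat>-linear map.\<close>
lemma matrix_vector_mult_comp: "(rmat A *v z) $ r = (\<Sum>j\<in>UNIV. real_of_int (A $ r $ j) * z $ j)"
  by (simp add: rmat_def matrix_vector_mult_def)

lemma min_supp_kernel_line:
  assumes m: "min_supp_kernel A z" and w: "rmat A *v w = 0" and s: "supp w \<subseteq> supp z"
  obtains t where "w = t *\<^sub>R z"
proof -
  from m have kz: "rmat A *v z = 0" and
    minimal: "\<And>w. w \<noteq> 0 \<Longrightarrow> rmat A *v w = 0 \<Longrightarrow> supp w \<subseteq> supp z \<Longrightarrow> supp w = supp z"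
    unfolding min_supp_kernel_def by auto
  from m obtain i where zi: "z $ i \<noteq> 0" by (auto simp: min_supp_kernel_def vec_eq_iff)
  define w' where "w' = w - (w $ i / z $ i) *\<^sub>R z"
  have "w' = 0"
  proof (rule ccontr)
    assume "w' \<noteq> 0"
    moreover have "rmat A *v w' = 0" using w kz by (simp add: w'_def algebra_simps)
    moreover have "supp w' \<subseteq> supp z" using s by (auto simp: supp_def w'_def)
    ultimately have "supp w' = supp z" by (rule minimal)
    moreover have "w' $ i = 0" using zi by (simp add: w'_def)
    ultimately show False using zi by (auto simp: supp_def)
  qed
  then show thesis by (intro that[of "w $ i / z $ i"]) (simp add: w'_def)
qed

lemma min_supp_kernel_scaleR:
  "min_supp_kernel A z \<Longrightarrow> t \<noteq> 0 \<Longrightarrow> min_supp_kernel A (t *\<^sub>R z)"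
  unfolding min_supp_kernel_def by (auto simp: algebra_simps)

text \<open>A \<rat>-linear functional on \<real> (viewed as a \<rat>-vector space) fixing 1. It maps a real
  solution of an integer linear system to a rational one.\<close>
lemma rat_linear_functional_exists:
  "\<exists>\<phi>::real \<Rightarrow> rat. (\<forall>x y. \<phi> (x + y) = \<phi> x + \<phi> y) \<and> (\<forall>q x. \<phi> (of_rat q * x) = q * \<phi> x) \<and> \<phi> 1 = 1"
proof -
  let ?s1 = "\<lambda>(q::rat) (x::real). of_rat q * x"
  let ?s2 = "(*) :: rat \<Rightarrow> rat \<Rightarrow> rat"
  interpret v1: vector_space ?s1
    by unfold_locales (auto simp: algebra_simps of_rat_add of_rat_mult)
  interpret v2: vector_space ?s2
    by unfold_locales (auto simp: algebra_simps)
  interpret vp: vector_space_pair ?s1 ?s2 by unfold_locales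
  have ind: "v1.independent {1::real}"
    using v1.independent_insert[of 1 "{}"] by auto
  define \<phi> where "\<phi> = vp.construct {1::real} (\<lambda>_. 1)"
  have "Vector_Spaces.linear ?s1 ?s2 \<phi>" unfolding \<phi>_def by (rule vp.linear_construct[OF ind])
  moreover have "\<phi> 1 = 1" unfolding \<phi>_def by (rule vp.construct_basis[OF ind]) simp
  ultimately show ?thesis unfolding Vector_Spaces.linear_iff by blast
qed

lemma clear_denominators:
  fixes q :: "'n::finite \<Rightarrow> rat"
  obtains D :: int and g :: "int^'n"
  where "D > 0" "\<And>j. real_of_int (g $ j) = real_of_int D * of_rat (q j)"
proof -
  define n where "n j = fst (quotient_of (q j))" for j
  define d where "d j = snd (quotient_of (q j))" for j
  have d_pos: "d j > 0" for j unfolding d_def using quotient_of_denom_pos' by auto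
  have q_eq: "q j = of_int (n j) / of_int (d j)" for j
    unfolding n_def d_def using quotient_of_div by (metis prod.collapse)
  define D where "D = (\<Prod>j\<in>UNIV. d j)"
  have "D > 0" unfolding D_def using d_pos by (simp add: prod_pos)
  moreover have "real_of_int (n j * (D div d j)) = real_of_int D * of_rat (q j)" for j
  proof -
    have "D = d j * (D div d j)" unfolding D_def by (simp add: dvd_prodI)
    then have "real_of_int D = real_of_int (d j) * real_of_int (D div d j)"
      by (metis of_int_mult)
    then show ?thesis using d_pos[of j] by (simp add: q_eq of_rat_divide field_simps)
  qed
  ultimately show thesis by (intro that[of D "\<chi> j. n j * (D div d j)"]) simp_all
qed

lemma min_supp_kernel_integer_point:
  assumes m: "min_supp_kernel A z"
  obtains g :: "int^'n" and t where "g \<noteq> 0" "rvec g = t *\<^sub>R z"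
proof -
  from m have kz: "rmat A *v z = 0" unfolding min_supp_kernel_def by auto
  from m obtain i where zi: "z $ i \<noteq> 0" by (auto simp: min_supp_kernel_def vec_eq_iff)
  obtain \<phi> :: "real \<Rightarrow> rat" where add: "\<forall>x y. \<phi> (x + y) = \<phi> x + \<phi> y"
    and hom: "\<forall>q x. \<phi> (of_rat q * x) = q * \<phi> x" and one: "\<phi> 1 = 1"
    using rat_linear_functional_exists by blast
  have zero: "\<phi> 0 = 0" using add[rule_format, of 0 0] by simp
  have sum: "\<phi> (\<Sum>j\<in>S. f j) = (\<Sum>j\<in>S. \<phi> (f j))" for S and f :: "'n \<Rightarrow> real"
    by (induction S rule: infinite_finite_induct) (simp_all add: zero add)
  have int_hom: "\<phi> (of_int k * x) = of_int k * \<phi> x" for k x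
    using hom[rule_format, of "of_int k" x] by simp
  text \<open>Apply \<phi> to the normalised vector with i-th entry 1.\<close>
  define z' where "z' = (1 / z $ i) *\<^sub>R z"
  define q where "q j = \<phi> (z' $ j)" for j
  define v where "v = (\<chi> j. real_of_rat (q j))"
  have "(rmat A *v v) $ r = 0" for r
  proof -
    have "(rmat A *v z') $ r = 0" using kz by (simp add: z'_def algebra_simps)
    then have "\<phi> (\<Sum>j\<in>UNIV. real_of_int (A $ r $ j) * z' $ j) = 0"
      by (simp only: matrix_vector_mult_comp zero)
    then have "(\<Sum>j\<in>UNIV. of_int (A $ r $ j) * q j) = 0"
      by (simp add: sum int_hom q_def)
    moreover have "(rmat A *v v) $ r = of_rat (\<Sum>j\<in>UNIV. of_int (A $ r $ j) * q j)"
      by (simp add: matrix_vector_mult_comp v_def of_rat_sum of_rat_mult)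
    ultimately show ?thesis by simp
  qed
  then have kv: "rmat A *v v = 0" by (simp add: vec_eq_iff)
  have vi: "v $ i = 1" using zi one by (simp add: v_def q_def z'_def)
  have "supp v \<subseteq> supp z" using zero by (auto simp: supp_def v_def q_def z'_def)
  then obtain s where vs: "v = s *\<^sub>R z" using min_supp_kernel_line[OF m kv] by blast
  obtain D g where D: "D > 0" and g: "\<And>j. real_of_int (g $ j) = real_of_int D * of_rat (q j)"
    using clear_denominators by blast
  have "rvec g = real_of_int D *\<^sub>R v" by (simp add: vec_eq_iff g v_def)
  then have "rvec g = (real_of_int D * s) *\<^sub>R z" by (simp add: vs)
  moreover have "g \<noteq> 0"
    using g[of i] vi D by (auto simp: v_def)
  ultimately show thesis by (rule that[rotated])
qed

text \<open>Comparing Euclidean lengths of integer vectors is comparing integer sums of squares,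
  a well-founded quantity.\<close>
lemma norm_rvec_le_iff:
  "norm (rvec g) \<le> norm (rvec h) \<longleftrightarrow> (\<Sum>j\<in>UNIV. (g $ j)\<^sup>2) \<le> (\<Sum>j\<in>UNIV. (h $ j)\<^sup>2)"
proof -
  have sq: "rvec g \<bullet> rvec g = real_of_int (\<Sum>j\<in>UNIV. (g $ j)\<^sup>2)" for g :: "int^'n"
    by (simp add: inner_vec_def power2_eq_square)
  show ?thesis unfolding norm_le sq of_int_le_iff ..
qed

lemma circuits_uminus:
  fixes g :: "int^'n"
  assumes "g \<in> circuits A" shows "- g \<in> circuits A"
proof -
  from assms obtain z t where "min_supp_kernel A z" "g \<noteq> 0" "rvec g = t *\<^sub>R z"
    and "\<forall>h::int^'n. h \<noteq> 0 \<and> (\<exists>t. rvec h = t *\<^sub>R z) \<longrightarrow> norm (rvec g) \<le> norm (rvec h)"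
    unfolding circuits_def by blast
  moreover have "rvec (- g) = (- t) *\<^sub>R z" using \<open>rvec g = t *\<^sub>R z\<close> by (simp add: rvec_uminus)
  moreover have "norm (rvec (- g)) = norm (rvec g)" by (simp add: rvec_uminus)
  ultimately show ?thesis unfolding circuits_def by (smt (verit) CollectI neg_equal_0_iff_equal)
qed

lemma circuit_on_ray:
  fixes z :: "real^'n"
  assumes m: "min_supp_kernel A z"
  obtains g where "g \<in> circuits A" "\<exists>t>0. rvec g = t *\<^sub>R z"
proof -
  let ?H = "{h::int^'n. h \<noteq> 0 \<and> (\<exists>t. rvec h = t *\<^sub>R z)}"
  obtain h0 t0 where "h0 \<noteq> 0" "rvec h0 = t0 *\<^sub>R z"
    using min_supp_kernel_integer_point[OF m] .
  then have "h0 \<in> ?H" by blast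
  then obtain g where gH: "g \<in> ?H" and least:
    "\<And>h. h \<in> ?H \<Longrightarrow> nat (\<Sum>j\<in>UNIV. (g $ j)\<^sup>2) \<le> nat (\<Sum>j\<in>UNIV. (h $ j)\<^sup>2)"
    using ex_has_least_nat[of "\<lambda>h. h \<in> ?H" h0 "\<lambda>h. nat (\<Sum>j\<in>UNIV. (h $ j)\<^sup>2)"] by blast
  have "norm (rvec g) \<le> norm (rvec h)" if "h \<in> ?H" for h
    using least[OF that] by (simp add: norm_rvec_le_iff nat_le_eq_zle sum_nonneg)
  then have gc: "g \<in> circuits A" using m gH unfolding circuits_def by blast
  from gH obtain t where g0: "g \<noteq> 0" and gt: "rvec g = t *\<^sub>R z" by blast
  show thesis
  proof (cases "t > 0")
    case True then show ?thesis using gc gt that by blast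
  next
    case False
    moreover have "t \<noteq> 0" using gt g0 by auto
    ultimately have "- t > 0" by simp
    moreover have "rvec (- g) = (- t) *\<^sub>R z" using gt by (simp add: rvec_uminus)
    ultimately show ?thesis using that[OF circuits_uminus[OF gc]] by blast
  qed
qed

lemma circuits_min_supp_kernel:
  assumes "g \<in> circuits A"
  shows "min_supp_kernel A (rvec g)"
proof -
  from assms obtain z t where "min_supp_kernel A z" "g \<noteq> 0" "rvec g = t *\<^sub>R z"
    unfolding circuits_def by blast
  then show ?thesis using min_supp_kernel_scaleR[of A z t] by (cases "t = 0") auto
qed

lemma circuits_kernel: "g \<in> circuits A \<Longrightarrow> rmat A *v rvec g = 0"
  and circuits_nonzero: "g \<in> circuits A \<Longrightarrow> rvec g \<noteq> 0"
  using circuits_min_supp_kernel unfolding min_supp_kernel_def by blast+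

text \<open>Two circuits with the same support agree up to sign: both are shortest integer points
  on the same line.\<close>
lemma circuits_same_supp:
  fixes g h :: "int^'n"
  assumes g: "g \<in> circuits A" and h: "h \<in> circuits A" and s: "supp (rvec h) = supp (rvec g)"
  shows "h = g \<or> h = - g"
proof -
  obtain s where hs: "rvec h = s *\<^sub>R rvec g"
    using min_supp_kernel_line[OF circuits_min_supp_kernel[OF g] circuits_kernel[OF h]] s by auto
  have s0: "s \<noteq> 0" using hs circuits_nonzero[OF h] by auto
  have shortest: "norm (rvec a) \<le> norm (rvec b)"
    if a: "a \<in> circuits A" and "b \<noteq> 0" and ab: "rvec b = r *\<^sub>R rvec a" for a b :: "int^'n" and r
  proof -
    from a obtain z t where "rvec a = t *\<^sub>R z" and
      "\<forall>h::int^'n. h \<noteq> 0 \<and> (\<exists>t. rvec h = t *\<^sub>R z) \<longrightarrow> norm (rvec a) \<le> norm (rvec h)"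
      unfolding circuits_def by blast
    then show ?thesis using \<open>b \<noteq> 0\<close> ab by (metis scaleR_scaleR)
  qed
  have ng: "norm (rvec g) > 0" using circuits_nonzero[OF g] by simp
  have "norm (rvec g) \<le> norm (rvec h)"
    using shortest[OF g _ hs] circuits_nonzero[OF h] by auto
  then have "1 \<le> \<bar>s\<bar>" using hs ng by simp
  moreover have "norm (rvec h) \<le> norm (rvec g)"
  proof (rule shortest[OF h])
    show "g \<noteq> 0" using circuits_nonzero[OF g] by simp
    show "rvec g = (1 / s) *\<^sub>R rvec h" using hs s0 by simp
  qed
  then have "\<bar>s\<bar> \<le> 1" using hs ng by (simp add: mult_le_cancel_right1)
  ultimately have "s = 1 \<or> s = -1" by linarith
  then show ?thesis using hs by (auto simp: rvec_inj simp flip: rvec_uminus)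
qed

text \<open>Finitely many supports, at most two circuits per support.\<close>
lemma circuits_finite: "finite (circuits A)"
proof -
  have "finite {h \<in> circuits A. supp (rvec h) = S}" for S
  proof (cases "\<exists>g \<in> circuits A. supp (rvec g) = S")
    case True
    then obtain g where "g \<in> circuits A" "supp (rvec g) = S" by blast
    then have "{h \<in> circuits A. supp (rvec h) = S} \<subseteq> {g, - g}"
      using circuits_same_supp by blast
    then show ?thesis by (rule finite_subset) simp
  next
    case False
    then have "{h \<in> circuits A. supp (rvec h) = S} = {}" by blast
    then show ?thesis by (metis finite.emptyI)
  qed
  then have "finite (\<Union>S. {h \<in> circuits A. supp (rvec h) = S})" by simp
  moreover have "circuits A = (\<Union>S. {h \<in> circuits A. supp (rvec h) = S})" by auto
  ultimately show ?thesis by simp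
qed

definition conformal :: "real^'n \<Rightarrow> real^'n \<Rightarrow> bool" where
  "conformal y z \<longleftrightarrow> (\<forall>i. (0 < y $ i \<longrightarrow> 0 < z $ i) \<and> (y $ i < 0 \<longrightarrow> z $ i < 0))"

lemma conformal_refl: "conformal z z"
  by (simp add: conformal_def)

lemma conformal_trans: "conformal x y \<Longrightarrow> conformal y z \<Longrightarrow> conformal x z"
  by (simp add: conformal_def)

lemma conformal_scaleR: "t > 0 \<Longrightarrow> conformal y z \<Longrightarrow> conformal (t *\<^sub>R y) z"
  by (simp add: conformal_def zero_less_mult_iff mult_less_0_iff)

lemma conformal_supp: "conformal y z \<Longrightarrow> supp y \<subseteq> supp z"
  unfolding conformal_def supp_def using linorder_neq_iff by fastforce

lemma norm1_nonneg: "0 \<le> norm1 z"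
  by (simp add: norm1_def sum_nonneg)

lemma norm1_zero: "norm1 0 = 0"
  by (simp add: norm1_def)

lemma norm1_pos: "z \<noteq> 0 \<Longrightarrow> 0 < norm1 z"
proof -
  assume "z \<noteq> 0"
  then obtain i where "z $ i \<noteq> 0" by (auto simp: vec_eq_iff)
  then have "0 < \<bar>z $ i\<bar>" by simp
  also have "\<bar>z $ i\<bar> \<le> norm1 z" unfolding norm1_def by (rule member_le_sum) auto
  finally show ?thesis .
qed

lemma norm1_scaleR: "norm1 (t *\<^sub>R z) = \<bar>t\<bar> * norm1 z"
  by (simp add: norm1_def sum_distrib_left abs_mult)

lemma norm1_triangle: "norm1 (x + y) \<le> norm1 x + norm1 y"
  unfolding norm1_def sum.distrib[symmetric] by (rule sum_mono) (simp add: abs_triangle_ineq)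

text \<open>Vectors conformal to a common vector do not cancel, so \<open>norm1\<close> is additive on them.\<close>
lemma norm1_conformal_add:
  assumes "conformal y z" "conformal y' z"
  shows "norm1 (y + y') = norm1 y + norm1 y'"
proof -
  have "\<bar>y $ j + y' $ j\<bar> = \<bar>y $ j\<bar> + \<bar>y' $ j\<bar>" for j
    using assms[unfolded conformal_def, rule_format, of j] by linarith
  then show ?thesis by (simp add: norm1_def sum.distrib)
qed

lemma ratio_scaleR: "t > 0 \<Longrightarrow> ratio c (t *\<^sub>R z) = ratio c z"
  by (simp add: ratio_def norm1_scaleR)

lemma ratio_eq: "z \<noteq> 0 \<Longrightarrow> - (rvec c \<bullet> z) = ratio c z * norm1 z"
  using norm1_pos[of z] by (simp add: ratio_def)

lemma ratio_add_le_max: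
  assumes "v \<noteq> 0" "w \<noteq> 0" "norm1 (v + w) = norm1 v + norm1 w"
  shows "ratio c (v + w) \<le> max (ratio c v) (ratio c w)"
proof -
  let ?M = "max (ratio c v) (ratio c w)"
  have "- (rvec c \<bullet> v) \<le> ?M * norm1 v" "- (rvec c \<bullet> w) \<le> ?M * norm1 w"
    using ratio_eq[OF assms(1)] ratio_eq[OF assms(2)] norm1_nonneg[of v] norm1_nonneg[of w]
    by (simp_all add: mult_right_mono)
  then have "- (rvec c \<bullet> (v + w)) \<le> ?M * norm1 (v + w)"
    by (simp add: assms(3) inner_add_right algebra_simps)
  moreover have pos: "norm1 (v + w) > 0"
    using norm1_pos[OF assms(1)] norm1_nonneg[of w] assms(3) by simp
  then have "v + w \<noteq> 0" by (auto simp: norm1_zero)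
  ultimately have "ratio c (v + w) * norm1 (v + w) \<le> ?M * norm1 (v + w)"
    using ratio_eq[of "v + w" c] by simp
  then show ?thesis using pos by (rule mult_right_le_imp_le)
qed

lemma sub_preserves_sign:
  fixes t w z :: real
  assumes t: "t > 0" and wz: "w \<noteq> 0 \<Longrightarrow> z \<noteq> 0" and le: "w \<noteq> 0 \<Longrightarrow> z / w > 0 \<Longrightarrow> t \<le> z / w"
  shows "(0 < z - t * w \<longrightarrow> 0 < z) \<and> (z - t * w < 0 \<longrightarrow> z < 0)"
proof (cases "w = 0")
  case False
  then have "z \<noteq> 0" using wz by blast
  then consider "w > 0" "z > 0" | "w > 0" "z < 0" | "w < 0" "z > 0" | "w < 0" "z < 0"
    using False by linarith
  then show ?thesis
  proof cases
    case 1
    then have "t * w \<le> z" using le by (simp add: pos_le_divide_eq mult.commute)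
    then show ?thesis using 1 by simp
  next
    case 2 then show ?thesis using t by (smt (verit) mult_pos_pos)
  next
    case 3 then show ?thesis using t by (smt (verit) mult_pos_neg)
  next
    case 4
    then have "z \<le> t * w" using le by (simp add: divide_neg_neg neg_le_divide_eq mult.commute)
    then show ?thesis using 4 by simp
  qed
qed simp

lemma conformal_reduction:
  fixes z w :: "real^'n"
  assumes sw: "supp w \<subseteq> supp z" and wi: "w $ i \<noteq> 0" and zi: "z $ i / w $ i > 0"
  obtains t where "t > 0" "conformal (z - t *\<^sub>R w) z" "supp (z - t *\<^sub>R w) \<subset> supp z"
proof -
  define J where "J = {j. w $ j \<noteq> 0 \<and> z $ j / w $ j > 0}"
  define t where "t = Min ((\<lambda>j. z $ j / w $ j) ` J)"
  have "i \<in> J" using wi zi by (simp add: J_def)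
  then have "t \<in> (\<lambda>j. z $ j / w $ j) ` J" unfolding t_def by (intro Min_in) auto
  then obtain i0 where i0: "i0 \<in> J" "t = z $ i0 / w $ i0" by blast
  have t_pos: "t > 0" using i0 by (simp add: J_def)
  have t_le: "t \<le> z $ j / w $ j" if "w $ j \<noteq> 0" "z $ j / w $ j > 0" for j
    unfolding t_def using that by (intro Min_le) (auto simp: J_def)
  have conf: "conformal (z - t *\<^sub>R w) z"
    unfolding conformal_def
    using sub_preserves_sign[OF t_pos] t_le sw by (auto simp: supp_def subset_iff)
  have "i0 \<in> supp z" "(z - t *\<^sub>R w) $ i0 = 0" using i0 by (auto simp: J_def supp_def)
  then have "supp (z - t *\<^sub>R w) \<subset> supp z" using conformal_supp[OF conf] by (auto simp: supp_def)
  then show thesis using that t_pos conf by blast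
qed

lemma conformal_min_supp_kernel_exists:
  fixes z :: "real^'n"
  assumes "z \<noteq> 0" "rmat A *v z = 0"
  obtains y where "min_supp_kernel A y" "conformal y z"
  using assms
proof (induction "card (supp z)" arbitrary: z thesis rule: less_induct)
  case less
  show ?case
  proof (cases "min_supp_kernel A z")
    case True then show ?thesis using less.prems conformal_refl by blast
  next
    case False
    then obtain w where w: "w \<noteq> 0" "rmat A *v w = 0" "supp w \<subset> supp z"
      using less.prems unfolding min_supp_kernel_def by blast
    then obtain i where wi: "w $ i \<noteq> 0" by (auto simp: vec_eq_iff)
    then have zi: "z $ i \<noteq> 0" using w(3) by (auto simp: supp_def)
    define w' where "w' = (z $ i / w $ i) *\<^sub>R w"
    have "supp w' = supp w" using wi zi by (simp add: w'_def)
    moreover have "w' $ i \<noteq> 0" "z $ i / w' $ i > 0" using wi zi by (simp_all add: w'_def)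
    ultimately obtain t where t: "t > 0" and conf: "conformal (z - t *\<^sub>R w') z"
      and smaller: "supp (z - t *\<^sub>R w') \<subset> supp z"
      using conformal_reduction[of w' z i] w(3) by blast
    have nonzero: "z - t *\<^sub>R w' \<noteq> 0"
    proof
      assume "z - t *\<^sub>R w' = 0"
      then have "supp z = supp w" using t wi zi \<open>supp w' = supp w\<close> by simp
      then show False using w(3) by simp
    qed
    have kernel: "rmat A *v (z - t *\<^sub>R w') = 0"
      using less.prems w(2) by (simp add: w'_def algebra_simps)
    have "card (supp (z - t *\<^sub>R w')) < card (supp z)"
      using smaller by (simp add: psubset_card_mono)
    then obtain y where "min_supp_kernel A y" "conformal y (z - t *\<^sub>R w')"
      using less.hyps[OF _ _ nonzero kernel] by blast
    then show ?thesis using less.prems(1) conformal_trans[OF _ conf] by blast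
  qed
qed

lemma feasible_box: "feasible A b u x \<Longrightarrow> 0 \<le> x $ i \<and> x $ i \<le> real_of_int (u $ i)"
  by (simp add: feasible_def)

lemma feasible_diff_kernel: "feasible A b u x \<Longrightarrow> feasible A b u y \<Longrightarrow> rmat A *v (y - x) = 0"
  by (simp add: feasible_def matrix_vector_mult_diff_distrib)

lemma applicable_diff: "feasible A b u y \<Longrightarrow> applicable A b u x (y - x)"
  unfolding applicable_def by (intro exI[of _ 1]) simp

lemma interval_step_eventually:
  fixes x z U :: real
  assumes "0 \<le> x" "x \<le> U" "0 < z \<Longrightarrow> x < U" "z < 0 \<Longrightarrow> 0 < x"
  shows "eventually (\<lambda>e. 0 \<le> x + e * z \<and> x + e * z \<le> U) (at_right 0)"
proof -
  have lim: "((\<lambda>e. x + e * z) \<longlongrightarrow> x) (at_right 0)"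
    by (auto intro!: tendsto_eq_intros)
  consider "z = 0" | "z > 0" | "z < 0" by linarith
  then show ?thesis
  proof cases
    case 1 then show ?thesis using assms by simp
  next
    case 2
    with assms have "eventually (\<lambda>e. x + e * z < U) (at_right 0)"
      by (intro order_tendstoD(2)[OF lim]) auto
    then show ?thesis using eventually_at_right_less[of 0]
      by eventually_elim (use 2 assms(1) in simp)
  next
    case 3
    with assms have "eventually (\<lambda>e. 0 < x + e * z) (at_right 0)"
      by (intro order_tendstoD(1)[OF lim]) auto
    then show ?thesis using eventually_at_right_less[of 0]
      by eventually_elim (use 3 assms(2) in \<open>smt (verit) mult_pos_neg\<close>)
  qed
qed

lemma applicable_iff_signs:
  assumes f: "feasible A b u x" and k: "rmat A *v z = 0"
  shows "applicable A b u x z \<longleftrightarrow>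
    (\<forall>i. (0 < z $ i \<longrightarrow> x $ i < real_of_int (u $ i)) \<and> (z $ i < 0 \<longrightarrow> 0 < x $ i))"
proof
  assume "applicable A b u x z"
  then obtain e where e: "e > 0" "feasible A b u (x + e *\<^sub>R z)" unfolding applicable_def by blast
  show "\<forall>i. (0 < z $ i \<longrightarrow> x $ i < real_of_int (u $ i)) \<and> (z $ i < 0 \<longrightarrow> 0 < x $ i)"
  proof (intro allI conjI impI)
    fix i
    have "0 \<le> x $ i + e * z $ i" "x $ i + e * z $ i \<le> real_of_int (u $ i)"
      using feasible_box[OF e(2), of i] by auto
    then show "x $ i < real_of_int (u $ i)" if "0 < z $ i"
      using e(1) that by (smt (verit) mult_pos_pos)
    show "0 < x $ i" if "z $ i < 0"
      using e(1) that \<open>0 \<le> x $ i + e * z $ i\<close> by (smt (verit) mult_pos_neg)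
  qed
next
  assume signs: "\<forall>i. (0 < z $ i \<longrightarrow> x $ i < real_of_int (u $ i)) \<and> (z $ i < 0 \<longrightarrow> 0 < x $ i)"
  have "eventually (\<lambda>e. \<forall>i. 0 \<le> x $ i + e * z $ i \<and> x $ i + e * z $ i \<le> real_of_int (u $ i))
      (at_right 0)"
    using signs feasible_box[OF f]
    by (intro eventually_all_finite allI interval_step_eventually) auto
  then have "eventually (\<lambda>e. e > 0 \<and> feasible A b u (x + e *\<^sub>R z)) (at_right 0)"
    using eventually_at_right_less[of 0]
    by eventually_elim (use f k in \<open>simp add: feasible_def algebra_simps\<close>)
  then show "applicable A b u x z"
    unfolding applicable_def using eventually_happens'[OF trivial_limit_at_right_real] by blast
qed

lemma applicable_conformal:
  assumes "feasible A b u x" "rmat A *v y = 0" "rmat A *v z = 0" "conformal y z"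
    and "applicable A b u x z"
  shows "applicable A b u x y"
  using assms applicable_iff_signs[OF assms(1)] unfolding conformal_def by meson

lemma applicable_before_compatible_move:
  assumes f: "feasible A b u x" and k: "rmat A *v G = 0"
    and e: "e > 0" "feasible A b u (y + e *\<^sub>R G)"
    and compatible: "\<And>j. (0 < G $ j \<longrightarrow> x $ j \<le> y $ j) \<and> (G $ j < 0 \<longrightarrow> y $ j \<le> x $ j)"
  shows "applicable A b u x G"
  unfolding applicable_iff_signs[OF f k]
proof (intro allI conjI impI)
  fix j
  have box: "0 \<le> y $ j + e * G $ j" "y $ j + e * G $ j \<le> real_of_int (u $ j)"
    using feasible_box[OF e(2), of j] by auto
  show "x $ j < real_of_int (u $ j)" if "0 < G $ j"
    using compatible[of j] box that e(1) by (smt (verit) mult_pos_pos)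
  show "0 < x $ j" if "G $ j < 0"
    using compatible[of j] box that e(1) by (smt (verit) mult_pos_neg)
qed

lemma circuit_dominates:
  fixes z :: "real^'n"
  assumes f: "feasible A b u x" and "rmat A *v z = 0" "z \<noteq> 0" "applicable A b u x z"
  shows "\<exists>g\<in>circuits A. applicable A b u x (rvec g) \<and> ratio c z \<le> ratio c (rvec g)"
  using assms(2-)
proof (induction "card (supp z)" arbitrary: z rule: less_induct)
  case less
  obtain y where y: "min_supp_kernel A y" "conformal y z"
    using conformal_min_supp_kernel_exists[OF less.prems(2,1)] .
  obtain g where g: "g \<in> circuits A" and "\<exists>s>0. rvec g = s *\<^sub>R y"
    using circuit_on_ray[OF y(1)] .
  then have cG: "conformal (rvec g) z" using conformal_scaleR y(2) by auto
  have aG: "applicable A b u x (rvec g)"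
    using applicable_conformal[OF f circuits_kernel[OF g] less.prems(1) cG less.prems(3)] .
  obtain i where Gi: "rvec g $ i \<noteq> 0" using circuits_nonzero[OF g] by (auto simp: vec_eq_iff)
  then have "z $ i / rvec g $ i > 0" using cG unfolding conformal_def
    by (metis divide_neg_neg divide_pos_pos linorder_neqE_linordered_idom)
  then obtain t where t: "t > 0" and conf: "conformal (z - t *\<^sub>R rvec g) z"
    and smaller: "supp (z - t *\<^sub>R rvec g) \<subset> supp z"
    using conformal_reduction[OF conformal_supp[OF cG] Gi] by blast
  define z' where "z' = z - t *\<^sub>R rvec g"
  have split: "z = t *\<^sub>R rvec g + z'" by (simp add: z'_def)
  show ?case
  proof (cases "z' = 0")
    case True
    then have "ratio c z = ratio c (rvec g)" using split ratio_scaleR[OF t] by simp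
    then show ?thesis using g aG by auto
  next
    case False
    have kz': "rmat A *v z' = 0" using less.prems circuits_kernel[OF g] by (simp add: z'_def algebra_simps)
    have "card (supp z') < card (supp z)" using smaller by (simp add: z'_def psubset_card_mono)
    moreover have "applicable A b u x z'"
      using applicable_conformal[OF f kz' less.prems(1) conf[folded z'_def] less.prems(3)] .
    ultimately obtain h where h: "h \<in> circuits A" "applicable A b u x (rvec h)"
      "ratio c z' \<le> ratio c (rvec h)"
      using less.hyps kz' False by blast
    have "norm1 z = norm1 (t *\<^sub>R rvec g) + norm1 z'"
      using norm1_conformal_add[OF conformal_scaleR[OF t cG] conf[folded z'_def]] split by simp
    then have "ratio c z \<le> max (ratio c (t *\<^sub>R rvec g)) (ratio c z')"
      using ratio_add_le_max[of "t *\<^sub>R rvec g" z' c] split t False circuits_nonzero[OF g] by simp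
    then show ?thesis using h g aG ratio_scaleR[OF t] by (metis max.bounded_iff nle_le order.trans)
  qed
qed

definition steepest_circuit :: "int^'n^'m \<Rightarrow> int^'m \<Rightarrow> int^'n \<Rightarrow> int^'n \<Rightarrow> real^'n \<Rightarrow> int^'n \<Rightarrow> bool" where
  "steepest_circuit A b c u x g \<longleftrightarrow> g \<in> circuits A \<and> applicable A b u x (rvec g) \<and>
     (\<forall>h\<in>circuits A. applicable A b u x (rvec h) \<longrightarrow> ratio c (rvec h) \<le> ratio c (rvec g))"

lemma sd_step_iff:
  "sd_step A b c u x x' \<longleftrightarrow> (\<exists>g \<alpha>. steepest_circuit A b c u x g \<and> ratio c (rvec g) > 0 \<and>
     feasible A b u (x + \<alpha> *\<^sub>R rvec g) \<and> (\<forall>a. feasible A b u (x + a *\<^sub>R rvec g) \<longrightarrow> a \<le> \<alpha>) \<and>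
     x' = x + \<alpha> *\<^sub>R rvec g)"
  unfolding sd_step_def steepest_circuit_def by blast

definition descends :: "int^'n \<Rightarrow> real \<Rightarrow> real^'n \<Rightarrow> bool" where
  "descends c d v \<longleftrightarrow> d * norm1 v \<le> - (rvec c \<bullet> v)"

definition descent_bounded :: "int^'n^'m \<Rightarrow> int^'m \<Rightarrow> int^'n \<Rightarrow> int^'n \<Rightarrow> real^'n \<Rightarrow> real \<Rightarrow> bool" where
  "descent_bounded A b c u x d \<longleftrightarrow>
     (\<forall>z. rmat A *v z = 0 \<and> applicable A b u x z \<longrightarrow> - (rvec c \<bullet> z) \<le> d * norm1 z)"

lemma descends_ratio: "descends c (ratio c v) v"
  by (cases "v = 0") (simp_all add: descends_def ratio_eq norm1_zero)

lemma descends_scaleR: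
  assumes "t \<ge> 0" "descends c d v" shows "descends c d (t *\<^sub>R v)"
proof -
  have "t * (d * norm1 v) \<le> t * - (rvec c \<bullet> v)"
    using assms unfolding descends_def by (rule mult_left_mono[rotated])
  then show ?thesis using assms(1) by (simp add: descends_def norm1_scaleR algebra_simps)
qed

lemma descends_add:
  assumes "d \<ge> 0" "descends c d v" "descends c d w"
  shows "descends c d (v + w)"
proof -
  have "d * norm1 (v + w) \<le> d * norm1 v + d * norm1 w"
    using mult_left_mono[OF norm1_triangle assms(1)] by (simp add: algebra_simps)
  then show ?thesis using assms(2,3) by (simp add: descends_def inner_add_right)
qed

lemma descends_mono: "d' \<le> d \<Longrightarrow> descends c d v \<Longrightarrow> descends c d' v"
  unfolding descends_def using mult_right_mono[OF _ norm1_nonneg] by (meson order.trans)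

lemma steepest_circuit_descent_bounded:
  assumes f: "feasible A b u x" and g: "steepest_circuit A b c u x g"
  shows "descent_bounded A b c u x (ratio c (rvec g))"
  unfolding descent_bounded_def
proof (intro allI impI, elim conjE)
  fix z assume k: "rmat A *v z = 0" and a: "applicable A b u x z"
  show "- (rvec c \<bullet> z) \<le> ratio c (rvec g) * norm1 z"
  proof (cases "z = 0")
    case False
    then obtain h where "h \<in> circuits A" "applicable A b u x (rvec h)" "ratio c z \<le> ratio c (rvec h)"
      using circuit_dominates[OF f k False a] by blast
    then have "ratio c z \<le> ratio c (rvec g)" using g by (force simp: steepest_circuit_def)
    then show ?thesis using ratio_eq[OF False] mult_right_mono[OF _ norm1_nonneg] by metis
  qed (simp add: norm1_zero)
qed

text \<open>Moving from x along a direction that descends at rate d cannot create an applicable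
  direction descending faster than d: otherwise combining the two moves would beat the bound
  at x.\<close>
lemma descent_bounded_move:
  assumes bound: "descent_bounded A b c u x d" and d: "d \<ge> 0"
    and f: "feasible A b u x" and f': "feasible A b u (x + v)" and v: "descends c d v"
  shows "descent_bounded A b c u (x + v) d"
  unfolding descent_bounded_def
proof (intro allI impI, elim conjE)
  fix w assume kw: "rmat A *v w = 0" and "applicable A b u (x + v) w"
  then obtain e where e: "e > 0" "feasible A b u (x + v + e *\<^sub>R w)" unfolding applicable_def by blast
  define z where "z = v + e *\<^sub>R w"
  have "z = (x + v + e *\<^sub>R w) - x" by (simp add: z_def)
  then have "- (rvec c \<bullet> z) \<le> d * norm1 z"
    using bound feasible_diff_kernel[OF f e(2)] applicable_diff[OF e(2)]
    unfolding descent_bounded_def by metis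
  also have "\<dots> \<le> d * (norm1 v + e * norm1 w)"
    using norm1_triangle[of v "e *\<^sub>R w"] e(1) d
    by (intro mult_left_mono) (simp_all add: z_def norm1_scaleR)
  finally have "- (rvec c \<bullet> v) + e * - (rvec c \<bullet> w) \<le> d * norm1 v + e * (d * norm1 w)"
    by (simp add: z_def inner_add_right algebra_simps)
  then have "e * - (rvec c \<bullet> w) \<le> e * (d * norm1 w)"
    using v unfolding descends_def by linarith
  then show "- (rvec c \<bullet> w) \<le> d * norm1 w" using e(1) by (rule mult_left_le_imp_le)
qed

lemma norm1_additive_same_signs:
  assumes "norm1 v + norm1 w \<le> norm1 (v + w)"
  shows "(0 < v $ j \<longrightarrow> 0 \<le> w $ j) \<and> (v $ j < 0 \<longrightarrow> w $ j \<le> 0)"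
proof -
  let ?gap = "\<lambda>j. \<bar>v $ j\<bar> + \<bar>w $ j\<bar> - \<bar>v $ j + w $ j\<bar>"
  have nonneg: "\<forall>j\<in>UNIV. 0 \<le> ?gap j" by (simp add: abs_triangle_ineq)
  have "sum ?gap UNIV = norm1 v + norm1 w - norm1 (v + w)"
    by (simp add: norm1_def sum.distrib sum_subtractf)
  then have "sum ?gap UNIV = 0" using assms sum_nonneg[of UNIV ?gap] nonneg by linarith
  then have "?gap j = 0" using sum_nonneg_eq_0_iff[of UNIV ?gap] nonneg by simp
  then show ?thesis by linarith
qed

lemma maximal_step_blocks:
  assumes "\<forall>a. feasible A b u (x + a *\<^sub>R G) \<longrightarrow> a \<le> \<alpha>"
  shows "\<not> applicable A b u (x + \<alpha> *\<^sub>R G) G"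
proof
  assume "applicable A b u (x + \<alpha> *\<^sub>R G) G"
  then obtain e where "e > 0" "feasible A b u (x + (\<alpha> + e) *\<^sub>R G)"
    unfolding applicable_def by (auto simp: algebra_simps)
  then show False using assms by fastforce
qed

text \<open>Along a nonzero direction the feasible step lengths form a closed set bounded above
  (the box is bounded), so a maximal step length exists.\<close>
lemma maximal_step_exists:
  assumes f: "feasible A b u x" and G: "G \<noteq> 0"
  obtains \<alpha> where "feasible A b u (x + \<alpha> *\<^sub>R G)" "\<forall>a. feasible A b u (x + a *\<^sub>R G) \<longrightarrow> a \<le> \<alpha>"
proof -
  define S where "S = {a. feasible A b u (x + a *\<^sub>R G)}"
  from G obtain j where Gj: "G $ j \<noteq> 0" by (auto simp: vec_eq_iff)
  have "a \<le> real_of_int (u $ j) / \<bar>G $ j\<bar>" if "a \<in> S" for a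
  proof -
    have "\<bar>a * G $ j\<bar> \<le> real_of_int (u $ j)"
      using feasible_box[OF f, of j] feasible_box[of A b u "x + a *\<^sub>R G" j] that
      by (simp add: S_def) linarith
    moreover have "a * \<bar>G $ j\<bar> \<le> \<bar>a * G $ j\<bar>" by (simp add: abs_mult mult_right_mono)
    ultimately show ?thesis using Gj by (simp add: pos_le_divide_eq)
  qed
  then have "bdd_above S" by (rule bdd_aboveI)
  moreover have "0 \<in> S" using f by (simp add: S_def)
  moreover have "closed S"
    unfolding S_def feasible_def matrix_vector_right_distrib matrix_vector_mult_scaleR
    by (intro closed_Collect_conj closed_Collect_eq closed_Collect_all closed_Collect_le
        continuous_intros)
  ultimately have "Sup S \<in> S" using closed_contains_Sup by blast
  moreover have "\<forall>a. feasible A b u (x + a *\<^sub>R G) \<longrightarrow> a \<le> Sup S"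
    using \<open>bdd_above S\<close> by (auto simp: S_def intro: cSup_upper)
  ultimately show thesis using that by (simp add: S_def)
qed

text \<open>Whenever some nonzero kernel direction is applicable, a steepest applicable circuit exists
  (there are only finitely many circuits) and it dominates that direction.\<close>
lemma steepest_circuit_exists:
  assumes f: "feasible A b u x" and "rmat A *v z = 0" "z \<noteq> 0" "applicable A b u x z"
  obtains g where "steepest_circuit A b c u x g" "ratio c z \<le> ratio c (rvec g)"
proof -
  obtain h where h: "h \<in> circuits A" "applicable A b u x (rvec h)" "ratio c z \<le> ratio c (rvec h)"
    using circuit_dominates[OF assms] by blast
  define AC where "AC = {g \<in> circuits A. applicable A b u x (rvec g)}"
  have fin: "finite AC" unfolding AC_def by (rule finite_subset[OF _ circuits_finite]) auto
  have "h \<in> AC" using h by (simp add: AC_def)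
  then have "Max ((\<lambda>g. ratio c (rvec g)) ` AC) \<in> (\<lambda>g. ratio c (rvec g)) ` AC"
    using fin by (intro Max_in) auto
  then obtain g where g: "g \<in> AC" "ratio c (rvec g) = Max ((\<lambda>g. ratio c (rvec g)) ` AC)" by auto
  then have "steepest_circuit A b c u x g"
    using fin unfolding steepest_circuit_def AC_def by auto
  moreover have "ratio c (rvec h) \<le> ratio c (rvec g)" using g fin \<open>h \<in> AC\<close> by simp
  ultimately show thesis using that h(3) by simp
qed

text \<open>A better
  feasible point would give an improving applicable direction, hence an improving steepest
  circuit, along which a maximal step exists.\<close>
lemma no_step_imp_optimal:
  assumes f: "feasible A b u x" and none: "\<nexists>y. sd_step A b c u x y"
  shows "optimal A b c u x"
  unfolding optimal_def
proof (intro conjI allI impI f, rule ccontr)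
  fix y assume fy: "feasible A b u y" and worse: "\<not> rvec c \<bullet> x \<le> rvec c \<bullet> y"
  define z where "z = y - x"
  have z0: "z \<noteq> 0" using worse by (auto simp: z_def)
  have kz: "rmat A *v z = 0" unfolding z_def by (rule feasible_diff_kernel[OF f fy])
  have az: "applicable A b u x z" unfolding z_def by (rule applicable_diff[OF fy])
  have "ratio c z > 0" unfolding ratio_def using worse norm1_pos[OF z0]
    by (simp add: z_def inner_diff_right)
  then obtain g where g: "steepest_circuit A b c u x g" "ratio c (rvec g) > 0"
    using steepest_circuit_exists[OF f kz z0 az] by (metis order.strict_trans2)
  then have "rvec g \<noteq> 0" using circuits_nonzero by (auto simp: steepest_circuit_def)
  then obtain \<alpha> where "feasible A b u (x + \<alpha> *\<^sub>R rvec g)"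
    "\<forall>a. feasible A b u (x + a *\<^sub>R rvec g) \<longrightarrow> a \<le> \<alpha>"
    using maximal_step_exists[OF f] by metis
  then show False using none g unfolding sd_step_iff by blast
qed

locale steepest_descent_run =
  fixes A :: "int^'n^'m" and b :: "int^'m" and c u :: "int^'n"
    and xs :: "nat \<Rightarrow> real^'n" and k :: nat and circ :: "nat \<Rightarrow> int^'n" and len :: "nat \<Rightarrow> real"
  assumes feasible_start: "feasible A b u (xs 0)"
    and steepest: "\<And>l. l < k \<Longrightarrow> steepest_circuit A b c u (xs l) (circ l)"
    and rate_pos: "\<And>l. l < k \<Longrightarrow> ratio c (rvec (circ l)) > 0"
    and feasible_next: "\<And>l. l < k \<Longrightarrow> feasible A b u (xs (Suc l))"
    and maximal: "\<And>l. l < k \<Longrightarrow> \<forall>a. feasible A b u (xs l + a *\<^sub>R rvec (circ l)) \<longrightarrow> a \<le> len l"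
    and next_point: "\<And>l. l < k \<Longrightarrow> xs (Suc l) = xs l + len l *\<^sub>R rvec (circ l)"
begin

abbreviation rate :: "nat \<Rightarrow> real" where
  "rate l \<equiv> ratio c (rvec (circ l))"

lemma feasible_xs: "l \<le> k \<Longrightarrow> feasible A b u (xs l)"
  by (induction l) (auto simp: feasible_start feasible_next)

lemma circ_kernel: "l < k \<Longrightarrow> rmat A *v rvec (circ l) = 0"
  and circ_applicable: "l < k \<Longrightarrow> applicable A b u (xs l) (rvec (circ l))"
  using steepest circuits_kernel by (auto simp: steepest_circuit_def)

lemma step_descends: "l < k \<Longrightarrow> descends c (rate l) (xs (Suc l) - xs l)"
proof -
  assume l: "l < k"
  obtain e where "e > 0" "feasible A b u (xs l + e *\<^sub>R rvec (circ l))"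
    using circ_applicable[OF l] unfolding applicable_def by blast
  then have "len l \<ge> 0" using maximal[OF l] by force
  then have "descends c (rate l) (len l *\<^sub>R rvec (circ l))"
    using descends_ratio by (rule descends_scaleR)
  then show ?thesis using next_point[OF l] by simp
qed

lemma descent_bounded_xs: "l < k \<Longrightarrow> descent_bounded A b c u (xs l) (rate l)"
  using steepest_circuit_descent_bounded[OF feasible_xs steepest] by simp

lemma rate_Suc_le: "Suc l < k \<Longrightarrow> rate (Suc l) \<le> rate l"
proof -
  assume sl: "Suc l < k"
  then have l: "l < k" by simp
  have "descent_bounded A b c u (xs l + (xs (Suc l) - xs l)) (rate l)"
    using descent_bounded_move[OF descent_bounded_xs[OF l] _ feasible_xs _ step_descends[OF l]]
      rate_pos[OF l] feasible_next[OF l] l by simp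
  then have "- (rvec c \<bullet> rvec (circ (Suc l))) \<le> rate l * norm1 (rvec (circ (Suc l)))"
    using circ_kernel[OF sl] circ_applicable[OF sl] unfolding descent_bounded_def by simp
  moreover have nonzero: "rvec (circ (Suc l)) \<noteq> 0"
    using circuits_nonzero steepest[OF sl] unfolding steepest_circuit_def by blast
  ultimately have "rate (Suc l) * norm1 (rvec (circ (Suc l))) \<le> rate l * norm1 (rvec (circ (Suc l)))"
    using ratio_eq[OF nonzero, of c] by simp
  then show ?thesis using norm1_pos[OF nonzero] by (rule mult_right_le_imp_le)
qed

lemma rate_antimono: "i \<le> l \<Longrightarrow> l < k \<Longrightarrow> rate l \<le> rate i"
proof (induction l rule: dec_induct)
  case (step n) then show ?case using rate_Suc_le[of n] by simp
qed simp

lemma path_descends: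
  assumes "j \<le> l" "l \<le> k" "0 \<le> d" "\<And>p. j \<le> p \<Longrightarrow> p < l \<Longrightarrow> d \<le> rate p"
  shows "descends c d (xs l - xs j)"
  using assms(1)
proof (induction l rule: dec_induct)
  case base then show ?case by (simp add: descends_def norm1_zero)
next
  case (step n)
  then have "descends c d (xs (Suc n) - xs n)"
    using descends_mono[OF assms(4) step_descends] assms(2) by simp
  then have "descends c d ((xs n - xs j) + (xs (Suc n) - xs n))"
    using descends_add[OF assms(3) step.IH] by blast
  then show ?case by simp
qed

text \<open>If circ i = circ m with i < m, the points
  strictly between form a path whose combination with a longer step along circ i is an applicable
  direction at xs i; steepness at xs i forces all these moves to be sign-compatible, and then
  circ i would still be applicable after step i, contradicting maximality of that step.\<close>
lemma circ_not_reused: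
  assumes im: "i < m" "m < k" shows "circ i \<noteq> circ m"
proof
  assume same: "circ i = circ m"
  define G where "G = rvec (circ i)"
  define d where "d = rate i"
  have i: "i < k" and d_pos: "d > 0" using im rate_pos by (auto simp: d_def)
  obtain e where e: "e > 0" "feasible A b u (xs m + e *\<^sub>R G)"
    using circ_applicable[OF im(2)] same unfolding applicable_def G_def by auto
  define P where "P = (len i + e) *\<^sub>R G"
  define W where "W = xs m - xs (Suc i)"
  have len: "len i \<ge> 0" using maximal[OF i] e(1) circ_applicable[OF i]
    unfolding applicable_def by force
  have "descends c d P"
    unfolding P_def G_def d_def using len e(1) descends_ratio by (intro descends_scaleR) auto
  moreover have "descends c d W" unfolding W_def
  proof (rule path_descends)
    show "Suc i \<le> m" "m \<le> k" "0 \<le> d" using im d_pos by simp_all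
    show "d \<le> rate p" if "Suc i \<le> p" "p < m" for p
      using rate_antimono[of p m] that im same by (simp add: d_def)
  qed
  moreover have "xs m + e *\<^sub>R G - xs i = P + W"
    using next_point[OF i] by (simp add: P_def W_def G_def algebra_simps)
  then have "- (rvec c \<bullet> (P + W)) \<le> d * norm1 (P + W)"
    using descent_bounded_xs[OF i] feasible_diff_kernel[OF feasible_xs e(2)]
      applicable_diff[OF e(2), of "xs i"] i
    unfolding descent_bounded_def d_def by (metis less_imp_le)
  ultimately have "d * (norm1 P + norm1 W) \<le> d * norm1 (P + W)"
    by (simp add: descends_def inner_add_right algebra_simps)
  then have no_cancel: "norm1 P + norm1 W \<le> norm1 (P + W)" using d_pos by simp
  text \<open>P is a positive multiple of G, so the path W from xs (Suc i) to xs m follows the sign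
    pattern of G; hence G is still applicable at xs (Suc i).\<close>
  have "applicable A b u (xs (Suc i)) G"
  proof (rule applicable_before_compatible_move[OF feasible_next[OF i] _ e])
    show "rmat A *v G = 0" using circ_kernel[OF i] by (simp add: G_def)
    fix j
    have "P $ j = (len i + e) * G $ j" "W $ j = xs m $ j - xs (Suc i) $ j"
      by (simp_all add: P_def W_def)
    then show "(0 < G $ j \<longrightarrow> xs (Suc i) $ j \<le> xs m $ j) \<and> (G $ j < 0 \<longrightarrow> xs m $ j \<le> xs (Suc i) $ j)"
      using norm1_additive_same_signs[OF no_cancel, of j] len e(1)
      by (auto simp: zero_less_mult_iff mult_less_0_iff)
  qed
  moreover have "xs (Suc i) = xs i + len i *\<^sub>R G" using next_point[OF i] by (simp add: G_def)
  ultimately show False using maximal_step_blocks[OF maximal[OF i]] by (simp add: G_def)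
qed

theorem length_le_card_circuits: "k \<le> card (circuits A)"
proof -
  have "inj_on circ {..<k}"
    by (rule inj_onI) (metis circ_not_reused lessThan_iff linorder_neqE_nat)
  moreover have "circ ` {..<k} \<subseteq> circuits A"
    using steepest by (auto simp: steepest_circuit_def)
  ultimately show ?thesis using card_inj_on_le[OF _ _ circuits_finite] by fastforce
qed

end

lemma augmentation_sequence:
  assumes "feasible A b u (xs 0)" "\<forall>l<k. sd_step A b c u (xs l) (xs (Suc l))"
  shows "k \<le> card (circuits A)" "feasible A b u (xs k)"
proof -
  obtain circ len where run: "\<And>l. l < k \<Longrightarrow> steepest_circuit A b c u (xs l) (circ l) \<and>
      ratio c (rvec (circ l)) > 0 \<and> feasible A b u (xs l + len l *\<^sub>R rvec (circ l)) \<and>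
      (\<forall>a. feasible A b u (xs l + a *\<^sub>R rvec (circ l)) \<longrightarrow> a \<le> len l) \<and>
      xs (Suc l) = xs l + len l *\<^sub>R rvec (circ l)"
    using assms(2) unfolding sd_step_iff by metis
  then interpret steepest_descent_run A b c u xs k circ len
    using assms(1) by unfold_locales auto
  show "k \<le> card (circuits A)" by (rule length_le_card_circuits)
  show "feasible A b u (xs k)" by (rule feasible_xs) simp
qed

theorem theorem2:
  fixes A :: "int^'n^'d" and b :: "int^'d" and c :: "int^'n" and u :: "int^'n"
  assumes "\<forall>i. u $ i \<ge> 0"
  shows
    "(\<forall>x z. feasible A b u x \<and> z \<noteq> 0 \<and> rmat A *v z = 0 \<and> applicable A b u x z \<longrightarrow>
        (\<exists>g \<in> circuits A. applicable A b u x (rvec g) \<and> ratio c (rvec g) \<ge> ratio c z))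
     \<and>
     (\<forall>x0. feasible A b u x0 \<longrightarrow>
        (\<forall>(xs :: nat \<Rightarrow> real^'n) k. xs 0 = x0 \<and> (\<forall>i<k. sd_step A b c u (xs i) (xs (Suc i))) \<longrightarrow>
            k \<le> card (circuits A) \<and>
            ((\<nexists>y. sd_step A b c u (xs k) y) \<longrightarrow> optimal A b c u (xs k))))"
proof (intro conjI allI impI)
  fix x z
  assume "feasible A b u x \<and> z \<noteq> 0 \<and> rmat A *v z = 0 \<and> applicable A b u x z"
  then show "\<exists>g \<in> circuits A. applicable A b u x (rvec g) \<and> ratio c (rvec g) \<ge> ratio c z"
    using circuit_dominates by blast
next
  fix x0 and xs :: "nat \<Rightarrow> real^'n" and k
  assume "feasible A b u x0" and "xs 0 = x0 \<and> (\<forall>i<k. sd_step A b c u (xs i) (xs (Suc i)))"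
  then have start: "feasible A b u (xs 0)" and run: "\<forall>i<k. sd_step A b c u (xs i) (xs (Suc i))"
    by auto
  show "k \<le> card (circuits A)" using augmentation_sequence(1)[OF start run] .
  show "optimal A b c u (xs k)" if "\<nexists>y. sd_step A b c u (xs k) y"
    using no_step_imp_optimal[OF augmentation_sequence(2)[OF start run] that] .
qed

end
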